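(* Let $d\geq 1$, $n\geq 1$ and $r$ be integers with $r\geq d+n$. Then a general form $F$ of degree $d$ in $n+1$ variables has an apolar star configuration $\mathbb{X}(r)\subset\mathbb{P}^n$.
   Context: Let $S=\mathbb{C}[x_0,\dots,x_n]$ and $T=\mathbb{C}[y_0,\dots,y_n]$, where $T$ acts on $S$ by differentiation, $y_j=\partial/\partial x_j$. For a form $F\in S$ of degree $d$, $F^\perp=\{\partial\in T:\partial F=0\}$. A finite set of points $\mathbb{X}\subset\mathbb{P}^n=\mathbb{P}(S_1)$ with defining ideal $I(\mathbb{X})\subseteq T$ is apolar to $F$ if $I(\mathbb{X})\subseteq F^\perp$. A star configuration $\mathbb{X}(r)\subset\mathbb{P}^n$: take $r$ linear forms $l_1,\dots,l_r\in T_1$ such that any $n+1$ of them are linearly independent; $\mathbb{X}(r)$ is the set of $\binom{r}{n}$ points obtained by intersecting the hyperplanes $\{l_i=0\}$ $n$ at a time in all possible ways, i.e. the variety defined by $\bigcap_{\{j_1,\dots,j_n\}\subseteq\{1,\dots,r\}}(l_{j_1},\dots,l_{j_n})$. "A general form" means any form in a suitable nonempty Zariski open subset of the space of degree $d$ forms. *)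

theory Defs
  imports Complex_Main "HOL-Library.Poly_Mapping"
begin

text \<open>S = C[x_0..x_n] and T = C[y_0..y_n] are both rendered as nat mpoly with variables
restricted to indices 0..n.\<close>

type_synonym 'v mpoly = "('v \<Rightarrow>\<^sub>0 nat) \<Rightarrow>\<^sub>0 complex"

definition mon_deg :: "('v \<Rightarrow>\<^sub>0 nat) \<Rightarrow> nat" where
  "mon_deg \<alpha> = (\<Sum>i\<in>Poly_Mapping.keys \<alpha>. Poly_Mapping.lookup \<alpha> i)"

definition mpeval :: "'v mpoly \<Rightarrow> ('v \<Rightarrow> complex) \<Rightarrow> complex" where
  "mpeval p x = (\<Sum>\<beta>\<in>Poly_Mapping.keys p. Poly_Mapping.lookup p \<beta> * (\<Prod>i\<in>Poly_Mapping.keys \<beta>. x i ^ Poly_Mapping.lookup \<beta> i))"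

definition in_vars :: "nat \<Rightarrow> nat mpoly \<Rightarrow> bool" where
  "in_vars n p \<longleftrightarrow> (\<forall>\<alpha>\<in>Poly_Mapping.keys p. Poly_Mapping.keys \<alpha> \<subseteq> {..n})"

definition is_form :: "nat \<Rightarrow> nat \<Rightarrow> nat mpoly \<Rightarrow> bool" where
  "is_form n d F \<longleftrightarrow> in_vars n F \<and> (\<forall>\<alpha>\<in>Poly_Mapping.keys F. mon_deg \<alpha> = d)"

text \<open>Coefficient of x^gamma in D F, where y_j acts as d/dx_j:
  y^beta applied to x^(beta+gamma) gives ((beta+gamma)!/gamma!) x^gamma.\<close>
definition diff_act :: "nat mpoly \<Rightarrow> nat mpoly \<Rightarrow> (nat \<Rightarrow>\<^sub>0 nat) \<Rightarrow> complex" where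
  "diff_act D F \<gamma> = (\<Sum>\<beta>\<in>Poly_Mapping.keys D. Poly_Mapping.lookup D \<beta> * Poly_Mapping.lookup F (\<beta> + \<gamma>) *
       (\<Prod>i\<in>Poly_Mapping.keys \<beta>. of_nat (fact (Poly_Mapping.lookup (\<beta> + \<gamma>) i)) / of_nat (fact (Poly_Mapping.lookup \<gamma> i))))"

definition perp :: "nat \<Rightarrow> nat mpoly \<Rightarrow> nat mpoly set" where
  "perp n F = {D. in_vars n D \<and> (\<forall>\<gamma>. diff_act D F \<gamma> = 0)}"

text \<open>Ideal in T of a set of points, the points being given by (all nonzero)
representative vectors in C^(n+1) (coordinates 0..n).\<close>
definition ideal_of :: "nat \<Rightarrow> (nat \<Rightarrow> complex) set \<Rightarrow> nat mpoly set" where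
  "ideal_of n X = {g. in_vars n g \<and> (\<forall>v\<in>X. mpeval g v = 0)}"

definition apolar :: "nat \<Rightarrow> nat mpoly \<Rightarrow> (nat \<Rightarrow> complex) set \<Rightarrow> bool" where
  "apolar n F X \<longleftrightarrow> ideal_of n X \<subseteq> perp n F"

text \<open>Linear forms l_1..l_r in T_1: l j i is the coefficient of y_i in l_j.
Any n+1 of them are linearly independent.\<close>
definition star_admissible :: "nat \<Rightarrow> nat \<Rightarrow> (nat \<Rightarrow> nat \<Rightarrow> complex) \<Rightarrow> bool" where
  "star_admissible n r l \<longleftrightarrow>
     (\<forall>J. J \<subseteq> {1..r} \<and> card J = n + 1 \<longrightarrow>
        (\<forall>c. (\<forall>i\<le>n. (\<Sum>j\<in>J. c j * l j i) = 0) \<longrightarrow> (\<forall>j\<in>J. c j = 0)))"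

text \<open>The star configuration X(r): all (nonzero representatives of) points of P^n
lying on n of the hyperplanes l_j = 0, i.e. the zero set of the intersection of
the ideals (l_j1,...,l_jn).\<close>
definition star_config :: "nat \<Rightarrow> nat \<Rightarrow> (nat \<Rightarrow> nat \<Rightarrow> complex) \<Rightarrow> (nat \<Rightarrow> complex) set" where
  "star_config n r l = {v. (\<exists>i\<le>n. v i \<noteq> 0) \<and>
     (\<exists>J. J \<subseteq> {1..r} \<and> card J = n \<and> (\<forall>j\<in>J. (\<Sum>i\<le>n. l j i * v i) = 0))}"

text \<open>A property holds for a general form of degree d in n+1 variables: it holds on a
nonempty Zariski open subset of the coefficient space, i.e. (equivalently, since
basic open sets form a basis) off the zero set of a nonzero polynomial h in the
coefficients (indexed by the degree d monomials in x_0..x_n).\<close>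
definition holds_generally :: "nat \<Rightarrow> nat \<Rightarrow> (nat mpoly \<Rightarrow> bool) \<Rightarrow> bool" where
  "holds_generally n d P \<longleftrightarrow>
     (\<exists>h :: (nat \<Rightarrow>\<^sub>0 nat) mpoly. h \<noteq> 0 \<and>
        (\<forall>\<beta>\<in>Poly_Mapping.keys h. \<forall>\<alpha>\<in>Poly_Mapping.keys \<beta>. Poly_Mapping.keys \<alpha> \<subseteq> {..n} \<and> mon_deg \<alpha> = d) \<and>
        (\<forall>F. is_form n d F \<and> mpeval h (Poly_Mapping.lookup F) \<noteq> 0 \<longrightarrow> P F))"

end

theory Submission
  imports
    Defs
    "HOL-Library.Multiset"
    "HOL-Computational_Algebra.Polynomial"
    "Jordan_Normal_Form.Determinant"
begin

text \<open>Take the star configuration cut out by the linear forms l_j = (1, j, j^2, ..., j^n)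
on the moment curve. Its point for an n-subset J is the coefficient vector of the polynomial
\<Prod>j\<in>J. (t - j), which l_j annihilates exactly when j \<in> J. The points with
J \<subseteq> {1..k+n} are as many as the monomials of degree k, and the products of the l_j
over the complements of these J form a dual family to them, so no nonzero form of degree
k \<le> r - n vanishes on X(r). Since the vanishing ideal is homogeneous, it has no elements of
degree \<le> d, while every operator of degree > d annihilates F.\<close>

definition mon_eval :: "('v \<Rightarrow>\<^sub>0 nat) \<Rightarrow> ('v \<Rightarrow> complex) \<Rightarrow> complex" where
  "mon_eval \<beta> v = (\<Prod>i\<in>Poly_Mapping.keys \<beta>. v i ^ Poly_Mapping.lookup \<beta> i)"

definition monomials :: "nat \<Rightarrow> nat \<Rightarrow> (nat \<Rightarrow>\<^sub>0 nat) set" where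
  "monomials n k = {\<alpha>. Poly_Mapping.keys \<alpha> \<subseteq> {..n} \<and> mon_deg \<alpha> = k}"

definition form_eval ::
    "nat \<Rightarrow> nat \<Rightarrow> ((nat \<Rightarrow>\<^sub>0 nat) \<Rightarrow> complex) \<Rightarrow> (nat \<Rightarrow> complex) \<Rightarrow> complex" where
  "form_eval n k c v = (\<Sum>\<beta>\<in>monomials n k. c \<beta> * mon_eval \<beta> v)"

lemma mon_deg_eq_sum:
  "finite S \<Longrightarrow> Poly_Mapping.keys \<alpha> \<subseteq> S \<Longrightarrow> mon_deg \<alpha> = (\<Sum>i\<in>S. Poly_Mapping.lookup \<alpha> i)"
  unfolding mon_deg_def by (rule sum.mono_neutral_left) (auto simp: in_keys_iff)

lemma mon_eval_eq_prod:
  "finite S \<Longrightarrow> Poly_Mapping.keys \<alpha> \<subseteq> S \<Longrightarrow> mon_eval \<alpha> v = (\<Prod>i\<in>S. v i ^ Poly_Mapping.lookup \<alpha> i)"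
  unfolding mon_eval_def by (rule prod.mono_neutral_left) (auto simp: in_keys_iff)

lemma mon_deg_add: "mon_deg (\<alpha> + \<beta>) = mon_deg \<alpha> + mon_deg \<beta>"
proof -
  let ?S = "Poly_Mapping.keys \<alpha> \<union> Poly_Mapping.keys \<beta>"
  have "mon_deg (\<alpha> + \<beta>) = (\<Sum>i\<in>?S. Poly_Mapping.lookup (\<alpha> + \<beta>) i)"
    using keys_add[of \<alpha> \<beta>] by (intro mon_deg_eq_sum) auto
  also have "\<dots> = (\<Sum>i\<in>?S. Poly_Mapping.lookup \<alpha> i) + (\<Sum>i\<in>?S. Poly_Mapping.lookup \<beta> i)"
    by (simp add: lookup_add sum.distrib)
  also have "\<dots> = mon_deg \<alpha> + mon_deg \<beta>"
    by (subst (1 2) mon_deg_eq_sum[of ?S]) auto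
  finally show ?thesis .
qed

lemma mon_eval_add: "mon_eval (\<alpha> + \<beta>) v = mon_eval \<alpha> v * mon_eval \<beta> v"
proof -
  let ?S = "Poly_Mapping.keys \<alpha> \<union> Poly_Mapping.keys \<beta>"
  have "mon_eval (\<alpha> + \<beta>) v = (\<Prod>i\<in>?S. v i ^ Poly_Mapping.lookup (\<alpha> + \<beta>) i)"
    using keys_add[of \<alpha> \<beta>] by (intro mon_eval_eq_prod) auto
  also have "\<dots> = (\<Prod>i\<in>?S. v i ^ Poly_Mapping.lookup \<alpha> i) * (\<Prod>i\<in>?S. v i ^ Poly_Mapping.lookup \<beta> i)"
    by (simp add: lookup_add power_add prod.distrib)
  also have "\<dots> = mon_eval \<alpha> v * mon_eval \<beta> v"
    by (subst (1 2) mon_eval_eq_prod[of ?S]) auto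
  finally show ?thesis .
qed

lemma mon_deg_single [simp]: "mon_deg (Poly_Mapping.single i k) = k"
  unfolding mon_deg_def by simp

lemma mon_eval_single [simp]: "mon_eval (Poly_Mapping.single i k) v = v i ^ k"
  unfolding mon_eval_def by simp

lemma mon_eval_0 [simp]: "mon_eval 0 v = 1"
  unfolding mon_eval_def by simp

lemma mon_deg_eq_0_iff: "mon_deg \<alpha> = 0 \<longleftrightarrow> \<alpha> = 0"
  unfolding mon_deg_def by (auto simp: in_keys_iff intro: poly_mapping_eqI)

lemma mon_eval_scale: "mon_eval \<gamma> (\<lambda>i. c * v i) = c ^ mon_deg \<gamma> * mon_eval \<gamma> v"
  unfolding mon_eval_def mon_deg_def by (simp add: power_mult_distrib prod.distrib power_sum)

lemma monomials_0: "monomials n 0 = {0}"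
  unfolding monomials_def using mon_deg_eq_0_iff by auto

lemma single_add_in_monomials:
  "i \<le> n \<Longrightarrow> \<beta> \<in> monomials n k \<Longrightarrow> \<beta> + Poly_Mapping.single i 1 \<in> monomials n (Suc k)"
  using keys_add[of \<beta> "Poly_Mapping.single i 1"] by (auto simp: monomials_def mon_deg_add)

definition poly_mapping_of_mset :: "'a multiset \<Rightarrow> ('a \<Rightarrow>\<^sub>0 nat)" where
  "poly_mapping_of_mset m = Abs_poly_mapping (count m)"

lemma lookup_poly_mapping_of_mset: "Poly_Mapping.lookup (poly_mapping_of_mset m) = count m"
  unfolding poly_mapping_of_mset_def by (rule lookup_Abs_poly_mapping) simp

lemma keys_poly_mapping_of_mset: "Poly_Mapping.keys (poly_mapping_of_mset m) = set_mset m"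
  by (auto simp: in_keys_iff lookup_poly_mapping_of_mset)

lemma inj_poly_mapping_of_mset: "inj poly_mapping_of_mset"
  by (rule injI) (metis lookup_poly_mapping_of_mset multiset_eqI)

lemma monomials_eq_image_multisets_of_size:
  "monomials n k = poly_mapping_of_mset ` multisets_of_size {..n} k"
proof (intro subset_antisym subsetI)
  fix \<alpha> assume \<alpha>: "\<alpha> \<in> monomials n k"
  define m where "m = Abs_multiset (Poly_Mapping.lookup \<alpha>)"
  have "finite {x. 0 < Poly_Mapping.lookup \<alpha> x}"
    using finite_keys[of \<alpha>] by (simp add: in_keys_iff[symmetric] keys_def[symmetric])
  then have count_m: "count m = Poly_Mapping.lookup \<alpha>"
    unfolding m_def by (rule count_Abs_multiset)
  have "\<alpha> = poly_mapping_of_mset m"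
    by (rule poly_mapping_eqI) (simp add: lookup_poly_mapping_of_mset count_m)
  moreover have set_m: "set_mset m = Poly_Mapping.keys \<alpha>"
    by (auto simp: set_mset_def count_m in_keys_iff)
  moreover have "size m = mon_deg \<alpha>"
    by (simp add: size_multiset_overloaded_eq mon_deg_def count_m set_m)
  ultimately show "\<alpha> \<in> poly_mapping_of_mset ` multisets_of_size {..n} k"
    using \<alpha> unfolding monomials_def multisets_of_size_def by auto
next
  fix \<alpha> assume "\<alpha> \<in> poly_mapping_of_mset ` multisets_of_size {..n} k"
  then show "\<alpha> \<in> monomials n k"
    by (auto simp: multisets_of_size_def monomials_def keys_poly_mapping_of_mset mon_deg_def
        lookup_poly_mapping_of_mset size_multiset_overloaded_eq)
qed

lemma finite_monomials [simp]: "finite (monomials n k)"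
  unfolding monomials_eq_image_multisets_of_size by auto

lemma card_monomials: "card (monomials n k) = (k + n) choose n"
proof -
  have "card (monomials n k) = card (multisets_of_size {..n} k)"
    unfolding monomials_eq_image_multisets_of_size
    by (rule card_image) (meson inj_poly_mapping_of_mset inj_on_subset subset_UNIV)
  also have "\<dots> = (k + n) choose n"
    by (simp add: card_multisets_of_size binomial_symmetric[of k "k + n", simplified] add.commute)
  finally show ?thesis .
qed

lemma prod_linear_forms_eq_form_eval:
  fixes a :: "nat \<Rightarrow> nat \<Rightarrow> complex"
  assumes "finite A"
  shows "\<exists>c. \<forall>v. (\<Prod>j\<in>A. \<Sum>i\<le>n. a j i * v i) = form_eval n (card A) c v"
  using assms
proof (induction A rule: finite_induct)
  case empty
  show ?case by (rule exI[of _ "\<lambda>_. 1"]) (simp add: form_eval_def monomials_0)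
next
  case (insert x A)
  then obtain c where c: "\<And>v. (\<Prod>j\<in>A. \<Sum>i\<le>n. a j i * v i) = form_eval n (card A) c v"
    by blast
  define S where "S = {..n} \<times> monomials n (card A)"
  define g :: "nat \<times> (nat \<Rightarrow>\<^sub>0 nat) \<Rightarrow> nat \<Rightarrow>\<^sub>0 nat"
    where "g = (\<lambda>(i, \<beta>). \<beta> + Poly_Mapping.single i 1)"
  define c' where "c' = (\<lambda>\<gamma>. \<Sum>(i, \<beta>)\<in>{p\<in>S. g p = \<gamma>}. a x i * c \<beta>)"
  have g_S: "g ` S \<subseteq> monomials n (Suc (card A))"
    using single_add_in_monomials[simplified] by (auto simp: S_def g_def)
  have "(\<Prod>j\<in>insert x A. \<Sum>i\<le>n. a j i * v i) = form_eval n (Suc (card A)) c' v" for v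
  proof -
    have "(\<Prod>j\<in>insert x A. \<Sum>i\<le>n. a j i * v i) =
        (\<Sum>i\<le>n. a x i * v i) * (\<Sum>\<beta>\<in>monomials n (card A). c \<beta> * mon_eval \<beta> v)"
      using insert by (simp add: c form_eval_def)
    also have "\<dots> = (\<Sum>(i, \<beta>)\<in>S. a x i * c \<beta> * mon_eval (g (i, \<beta>)) v)"
      unfolding S_def g_def sum_product sum.cartesian_product
      by (rule sum.cong) (auto simp: mon_eval_add)
    also have "\<dots> = (\<Sum>\<gamma>\<in>monomials n (Suc (card A)).
        \<Sum>(i, \<beta>)\<in>{p\<in>S. g p = \<gamma>}. a x i * c \<beta> * mon_eval (g (i, \<beta>)) v)"
      by (rule sum.group[symmetric]) (use g_S in \<open>auto simp: S_def\<close>)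
    also have "\<dots> = form_eval n (Suc (card A)) c' v"
      unfolding form_eval_def c'_def sum_distrib_right
      by (intro sum.cong) (auto simp: case_prod_beta)
    finally show ?thesis .
  qed
  then show ?case using insert by auto
qed

lemma mpeval_eq_sum_mon_eval:
  "mpeval p x = (\<Sum>\<beta>\<in>Poly_Mapping.keys p. Poly_Mapping.lookup p \<beta> * mon_eval \<beta> x)"
  unfolding mpeval_def mon_eval_def ..

lemma form_eval_eq_0_if_vanishes_on_line:
  assumes "in_vars n D" and vanish: "\<And>c. c \<noteq> 0 \<Longrightarrow> mpeval D (\<lambda>i. c * v i) = 0"
  shows "form_eval n k (Poly_Mapping.lookup D) v = 0"
proof -
  define Q where "Q = (\<Sum>\<gamma>\<in>Poly_Mapping.keys D.
    monom (Poly_Mapping.lookup D \<gamma> * mon_eval \<gamma> v) (mon_deg \<gamma>))"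
  have poly_Q: "poly Q c = mpeval D (\<lambda>i. c * v i)" for c
    unfolding Q_def mpeval_eq_sum_mon_eval mon_eval_scale
    by (simp add: poly_sum poly_monom mult_ac)
  have "Q = 0"
  proof (rule ccontr)
    assume "Q \<noteq> 0"
    then have "finite {c. poly Q c = 0}" by (rule poly_roots_finite)
    moreover have "UNIV - {0} \<subseteq> {c. poly Q c = 0}" using vanish poly_Q by auto
    ultimately have "finite (UNIV - {0 :: complex})" by (rule finite_subset[rotated])
    then show False by (simp add: infinite_UNIV_char_0)
  qed
  have "form_eval n k (Poly_Mapping.lookup D) v =
      (\<Sum>\<gamma>\<in>{\<gamma>\<in>Poly_Mapping.keys D. mon_deg \<gamma> = k}. Poly_Mapping.lookup D \<gamma> * mon_eval \<gamma> v)"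
    unfolding form_eval_def
    by (intro sum.mono_neutral_right finite_monomials)
      (use assms(1) in \<open>auto simp: in_vars_def monomials_def in_keys_iff\<close>)
  also have "\<dots> = coeff Q k"
    unfolding Q_def coeff_sum coeff_monom by (simp add: sum.inter_filter)
  finally show ?thesis using \<open>Q = 0\<close> by simp
qed

lemma det_ne_0_if_product_diagonal:
  fixes A B :: "'a::field mat"
  assumes A: "A \<in> carrier_mat N N" and B: "B \<in> carrier_mat N N"
    and diagonal: "\<And>i j. i < N \<Longrightarrow> j < N \<Longrightarrow> (A * B) $$ (i, j) = 0 \<longleftrightarrow> i \<noteq> j"
  shows "det A \<noteq> 0"
proof -
  have AB: "A * B \<in> carrier_mat N N" using A B by auto
  have "upper_triangular (A * B)"
    unfolding upper_triangular_def using AB diagonal by auto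
  then have "det (A * B) = prod_list (diag_mat (A * B))"
    using AB by (rule det_upper_triangular)
  also have "\<dots> \<noteq> 0"
    using AB diagonal by (auto simp: prod_list_zero_iff diag_mat_def)
  finally show ?thesis using det_mult[OF A B] by auto
qed

lemma coefficients_eq_0_if_dual_family:
  fixes e g :: "'p \<Rightarrow> 'b \<Rightarrow> 'a::field"
  assumes "finite P" "finite B" "card P = card B"
    and dual: "\<And>p q. p \<in> P \<Longrightarrow> q \<in> P \<Longrightarrow> (\<Sum>b\<in>B. g p b * e q b) = 0 \<longleftrightarrow> p \<noteq> q"
    and vanish: "\<And>q. q \<in> P \<Longrightarrow> (\<Sum>b\<in>B. c b * e q b) = 0"
    and "b \<in> B"
  shows "c b = 0"
proof -
  define N where "N = card B"
  obtain eP where eP: "bij_betw eP {0..<N} P"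
    using ex_bij_betw_nat_finite[OF \<open>finite P\<close>] \<open>card P = card B\<close> unfolding N_def by metis
  obtain eB where eB: "bij_betw eB {0..<N} B"
    using ex_bij_betw_nat_finite[OF \<open>finite B\<close>] unfolding N_def by metis
  have reindex: "(\<Sum>j\<in>{0..<N}. f (eB j)) = (\<Sum>b\<in>B. f b)" for f :: "'b \<Rightarrow> 'a"
    by (rule sum.reindex_bij_betw[OF eB])
  have eP_in: "eP i \<in> P" if "i < N" for i
    using eP that by (auto dest: bij_betwE)
  define E where "E = mat N N (\<lambda>(i, j). e (eP i) (eB j))"
  define G where "G = mat N N (\<lambda>(j, i). g (eP i) (eB j))"
  have E: "E \<in> carrier_mat N N" and G: "G \<in> carrier_mat N N"
    unfolding E_def G_def by auto
  have "(E * G) $$ (i, i') = 0 \<longleftrightarrow> i \<noteq> i'" if "i < N" "i' < N" for i i'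
  proof -
    have "(E * G) $$ (i, i') = (\<Sum>b\<in>B. g (eP i') b * e (eP i) b)"
      using that reindex[of "\<lambda>b. g (eP i') b * e (eP i) b"]
      by (simp add: E_def G_def scalar_prod_def mult.commute)
    moreover have "eP i' = eP i \<longleftrightarrow> i' = i"
      using eP that by (auto simp: bij_betw_def inj_on_def)
    ultimately show ?thesis using dual eP_in that by auto
  qed
  then have "det E \<noteq> 0" by (rule det_ne_0_if_product_diagonal[OF E G])
  define x where "x = vec N (\<lambda>j. c (eB j))"
  have "E *\<^sub>v x = 0\<^sub>v N"
  proof (rule eq_vecI)
    fix i assume "i < dim_vec (0\<^sub>v N :: 'a vec)"
    then have "i < N" by simp
    then have "(E *\<^sub>v x) $ i = (\<Sum>b\<in>B. c b * e (eP i) b)"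
      using reindex[of "\<lambda>b. c b * e (eP i) b"]
      by (simp add: E_def x_def scalar_prod_def mult.commute)
    then show "(E *\<^sub>v x) $ i = 0\<^sub>v N $ i" using vanish eP_in \<open>i < N\<close> by simp
  qed (simp add: E_def)
  moreover have "x \<in> carrier_vec N" by (simp add: x_def)
  ultimately have "x = 0\<^sub>v N"
    using det_0_iff_vec_prod_zero[OF E] \<open>det E \<noteq> 0\<close> by blast
  moreover obtain j where "j < N" "b = eB j"
    using eB \<open>b \<in> B\<close> by (auto simp: bij_betw_def)
  ultimately show ?thesis
    unfolding x_def by (metis index_vec index_zero_vec(1))
qed

definition moment_form :: "nat \<Rightarrow> nat \<Rightarrow> complex" where
  "moment_form j i = of_nat j ^ i"

definition root_poly :: "nat set \<Rightarrow> complex poly" where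
  "root_poly J = (\<Prod>j\<in>J. [:- of_nat j, 1:])"

definition star_point :: "nat set \<Rightarrow> nat \<Rightarrow> complex" where
  "star_point J i = coeff (root_poly J) i"

lemma degree_root_poly: "finite J \<Longrightarrow> degree (root_poly J) = card J"
  unfolding root_poly_def by (subst degree_prod_eq_sum_degree) auto

lemma coeff_root_poly_card: "finite J \<Longrightarrow> coeff (root_poly J) (card J) = 1"
  using lead_coeff_prod[of "\<lambda>j. [:- of_nat j, 1::complex:]" J] degree_root_poly[of J]
  unfolding root_poly_def by simp

lemma poly_root_poly_eq_0_iff: "finite J \<Longrightarrow> poly (root_poly J) (of_nat j) = 0 \<longleftrightarrow> j \<in> J"
  unfolding root_poly_def by (auto simp: poly_prod prod_zero_iff)

lemma sum_moment_form_coeff: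
  assumes "degree q \<le> n"
  shows "(\<Sum>i\<le>n. moment_form j i * coeff q i) = poly q (of_nat j)"
proof -
  have "(\<Sum>i\<le>n. moment_form j i * coeff q i) = (\<Sum>i\<le>n. coeff q i * of_nat j ^ i)"
    by (simp add: moment_form_def mult.commute)
  also have "\<dots> = (\<Sum>i\<le>degree q. coeff q i * of_nat j ^ i)"
    by (rule sum.mono_neutral_right) (use assms in \<open>auto simp: coeff_eq_0\<close>)
  also have "\<dots> = poly q (of_nat j)" by (simp add: poly_altdef)
  finally show ?thesis .
qed

lemma sum_moment_form_star_point_eq_0_iff:
  assumes "finite J" "card J \<le> n"
  shows "(\<Sum>i\<le>n. moment_form j i * star_point J i) = 0 \<longleftrightarrow> j \<in> J"
  using assms unfolding star_point_def
  by (simp add: sum_moment_form_coeff degree_root_poly poly_root_poly_eq_0_iff)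

lemma star_admissible_moment_form: "star_admissible n r moment_form"
  unfolding star_admissible_def
proof (intro allI impI ballI)
  fix J c j0
  assume J: "J \<subseteq> {1..r} \<and> card J = n + 1"
    and dependence: "\<forall>i\<le>n. (\<Sum>j\<in>J. c j * moment_form j i) = 0" and "j0 \<in> J"
  have "finite J" using J finite_subset by blast
  define q where "q = root_poly (J - {j0})"
  have "degree q = n"
    unfolding q_def using \<open>finite J\<close> J \<open>j0 \<in> J\<close> by (simp add: degree_root_poly)
  have "0 = (\<Sum>i\<le>n. coeff q i * (\<Sum>j\<in>J. c j * moment_form j i))"
    using dependence by simp
  also have "\<dots> = (\<Sum>j\<in>J. c j * (\<Sum>i\<le>n. moment_form j i * coeff q i))"
    by (simp add: sum_distrib_left sum_distrib_right mult_ac sum.swap[of _ "{..n}"])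
  also have "\<dots> = (\<Sum>j\<in>J. c j * poly q (of_nat j))"
    using \<open>degree q = n\<close> by (simp add: sum_moment_form_coeff)
  also have "\<dots> = c j0 * poly q (of_nat j0)"
    using \<open>finite J\<close> \<open>j0 \<in> J\<close>
    by (subst sum.remove) (auto simp: q_def poly_root_poly_eq_0_iff intro!: sum.neutral)
  finally have "c j0 * poly q (of_nat j0) = 0" by simp
  moreover have "poly q (of_nat j0) \<noteq> 0"
    unfolding q_def using \<open>finite J\<close> by (simp add: poly_root_poly_eq_0_iff)
  ultimately show "c j0 = 0" by simp
qed

lemma scaled_star_point_in_star_config:
  assumes "J \<subseteq> {1..r}" "card J = n" "c \<noteq> 0"
  shows "(\<lambda>i. c * star_point J i) \<in> star_config n r moment_form"
proof -
  have "finite J" using assms(1) finite_subset by blast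
  then have "c * star_point J n \<noteq> 0"
    using assms coeff_root_poly_card[OF \<open>finite J\<close>] by (simp add: star_point_def)
  moreover have "(\<Sum>i\<le>n. moment_form j i * (c * star_point J i)) = 0" if "j \<in> J" for j
  proof -
    have "(\<Sum>i\<le>n. moment_form j i * (c * star_point J i)) =
        c * (\<Sum>i\<le>n. moment_form j i * star_point J i)"
      by (simp add: sum_distrib_left mult_ac)
    then show ?thesis
      using sum_moment_form_star_point_eq_0_iff[OF \<open>finite J\<close>] assms(2) that by simp
  qed
  ultimately show ?thesis
    unfolding star_config_def using assms(1,2) by blast
qed

lemma form_vanishing_on_star_points_eq_0:
  assumes vanish: "\<And>J. J \<subseteq> {1..k+n} \<Longrightarrow> card J = n \<Longrightarrow> form_eval n k c (star_point J) = 0"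
    and "\<beta> \<in> monomials n k"
  shows "c \<beta> = 0"
proof -
  define A where "A = {1..k+n}"
  define Js where "Js = {J. J \<subseteq> A \<and> card J = n}"
  have J_facts: "finite J" "J \<subseteq> A" "card J = n" "card (A - J) = k" if "J \<in> Js" for J
    using that finite_subset[of J A] card_Diff_subset[of J A] by (auto simp: Js_def A_def)
  have "\<exists>g. \<forall>v. (\<Prod>j\<in>A - J. \<Sum>i\<le>n. moment_form j i * v i) = form_eval n k g v"
    if "J \<in> Js" for J
    using prod_linear_forms_eq_form_eval[where A = "A - J" and a = moment_form] J_facts[OF that]
    by (simp add: A_def)
  then obtain g where g: "\<And>J v. J \<in> Js \<Longrightarrow>
      (\<Prod>j\<in>A - J. \<Sum>i\<le>n. moment_form j i * v i) = form_eval n k (g J) v"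
    by metis
  have dual: "(\<Sum>\<beta>\<in>monomials n k. g J \<beta> * mon_eval \<beta> (star_point J')) = 0 \<longleftrightarrow> J \<noteq> J'"
    if "J \<in> Js" "J' \<in> Js" for J J'
  proof -
    have "(\<Sum>\<beta>\<in>monomials n k. g J \<beta> * mon_eval \<beta> (star_point J')) =
        (\<Prod>j\<in>A - J. \<Sum>i\<le>n. moment_form j i * star_point J' i)"
      using g[OF that(1)] by (simp add: form_eval_def)
    moreover have "(\<Prod>j\<in>A - J. \<Sum>i\<le>n. moment_form j i * star_point J' i) = 0 \<longleftrightarrow> \<not> J' \<subseteq> J"
      using J_facts[OF that(2)] sum_moment_form_star_point_eq_0_iff[of J' n]
      by (auto simp: prod_zero_iff A_def)
    moreover have "J' \<subseteq> J \<longleftrightarrow> J = J'"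
      using J_facts[OF that(1)] J_facts[OF that(2)] card_subset_eq[of J J'] by auto
    ultimately show ?thesis by simp
  qed
  have "card Js = card (monomials n k)"
    unfolding Js_def A_def card_monomials by (simp add: n_subsets)
  then show ?thesis
    using coefficients_eq_0_if_dual_family[of Js "monomials n k" g "\<lambda>J \<beta>. mon_eval \<beta> (star_point J)"]
      dual vanish assms(2)
    by (auto simp: Js_def A_def form_eval_def)
qed

lemma lookup_ideal_of_star_config_eq_0:
  assumes D: "D \<in> ideal_of n (star_config n r moment_form)" and "mon_deg \<beta> + n \<le> r"
  shows "Poly_Mapping.lookup D \<beta> = 0"
proof (cases "\<beta> \<in> Poly_Mapping.keys D")
  case True
  have "in_vars n D" using D by (simp add: ideal_of_def)
  then have "\<beta> \<in> monomials n (mon_deg \<beta>)"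
    using True by (simp add: in_vars_def monomials_def)
  moreover have "form_eval n (mon_deg \<beta>) (Poly_Mapping.lookup D) (star_point J) = 0"
    if "J \<subseteq> {1..mon_deg \<beta> + n}" "card J = n" for J
  proof (rule form_eval_eq_0_if_vanishes_on_line[OF \<open>in_vars n D\<close>])
    fix c :: complex assume "c \<noteq> 0"
    then have "(\<lambda>i. c * star_point J i) \<in> star_config n r moment_form"
      using that assms(2) by (intro scaled_star_point_in_star_config) auto
    then show "mpeval D (\<lambda>i. c * star_point J i) = 0"
      using D by (simp add: ideal_of_def)
  qed
  ultimately show ?thesis by (rule form_vanishing_on_star_points_eq_0[rotated])
qed (simp add: in_keys_iff)

lemma apolar_if_ideal_has_no_low_degree_terms:
  assumes F: "is_form n d F"
    and no_low: "\<And>D \<beta>. D \<in> ideal_of n X \<Longrightarrow> mon_deg \<beta> \<le> d \<Longrightarrow> Poly_Mapping.lookup D \<beta> = 0"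
  shows "apolar n F X"
  unfolding apolar_def
proof
  fix D assume D: "D \<in> ideal_of n X"
  have "Poly_Mapping.lookup D \<beta> * Poly_Mapping.lookup F (\<beta> + \<gamma>) = 0" for \<beta> \<gamma>
  proof (cases "\<beta> + \<gamma> \<in> Poly_Mapping.keys F")
    case True
    then have "mon_deg \<beta> \<le> d"
      using F mon_deg_add[of \<beta> \<gamma>] by (auto simp: is_form_def)
    then show ?thesis using no_low[OF D] by simp
  qed (simp add: in_keys_iff)
  then have "diff_act D F \<gamma> = 0" for \<gamma>
    unfolding diff_act_def by (simp add: sum.neutral)
  then show "D \<in> perp n F"
    using D by (simp add: perp_def ideal_of_def)
qed

lemma holds_generally_if_all_forms:
  assumes "\<And>F. is_form n d F \<Longrightarrow> P F"
  shows "holds_generally n d P"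
  unfolding holds_generally_def
  by (rule exI[of _ "Poly_Mapping.single 0 1"]) (simp add: assms)

theorem lemma3p1:
  fixes d n r :: nat
  assumes "d \<ge> 1" and "n \<ge> 1" and "r \<ge> d + n"
  shows "holds_generally n d
           (\<lambda>F. \<exists>l. star_admissible n r l \<and> apolar n F (star_config n r l))"
proof (rule holds_generally_if_all_forms)
  fix F assume "is_form n d F"
  then have "apolar n F (star_config n r moment_form)"
    using assms(3)
    by (intro apolar_if_ideal_has_no_low_degree_terms lookup_ideal_of_star_config_eq_0) auto
  then show "\<exists>l. star_admissible n r l \<and> apolar n F (star_config n r l)"
    using star_admissible_moment_form by blast
qed

end
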